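(* Let $X$ be a complex Banach space with open unit ball $B$ and let $Y$ be a closed subspace of $X$ with open unit ball $B_Y$. Then for every $f\in A_u(B)$, $$\widehat{f|_{B_Y}}\big(M_0(B_Y)\big)\subset \hat f\big(M_0(B)\big).$$
   Context: For a Banach space $Z$ with open unit ball $B_Z$, $A_u(B_Z)$ is the uniform algebra of bounded holomorphic functions on $B_Z$ that are uniformly continuous; $M_0(B_Z)$ is the set of nonzero multiplicative linear functionals $\tau$ on $A_u(B_Z)$ with $\tau(z^* )=0$ for every $z^*\in Z^*$; $\hat g(\tau)=\tau(g)$. *)

theory Defs
  imports "HOL-Analysis.Analysis"
begin

text \<open>A complex Banach space is modelled as a real Banach space 'a together with a
  complex scalar multiplication sm extending the real one and compatible with the norm.\<close>

definition complex_scaling :: "(complex \<Rightarrow> 'a::real_normed_vector \<Rightarrow> 'a) \<Rightarrow> bool" where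
  "complex_scaling sm \<longleftrightarrow>
     (\<forall>a x y. sm a (x + y) = sm a x + sm a y) \<and>
     (\<forall>a b x. sm (a + b) x = sm a x + sm b x) \<and>
     (\<forall>a b x. sm (a * b) x = sm a (sm b x)) \<and>
     (\<forall>r x. sm (complex_of_real r) x = r *\<^sub>R x) \<and>
     (\<forall>a x. norm (sm a x) = cmod a * norm x)"

definition complex_subspace :: "(complex \<Rightarrow> 'a::real_normed_vector \<Rightarrow> 'a) \<Rightarrow> 'a set \<Rightarrow> bool" where
  "complex_subspace sm V \<longleftrightarrow> 0 \<in> V \<and> (\<forall>x\<in>V. \<forall>y\<in>V. x + y \<in> V) \<and> (\<forall>a. \<forall>x\<in>V. sm a x \<in> V)"

definition uball :: "'a::real_normed_vector set \<Rightarrow> 'a set" where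
  "uball V = ball 0 1 \<inter> V"

definition cdual :: "(complex \<Rightarrow> 'a::real_normed_vector \<Rightarrow> 'a) \<Rightarrow> 'a set \<Rightarrow> ('a \<Rightarrow> complex) set" where
  "cdual sm V = {L. (\<forall>v\<in>V. \<forall>w\<in>V. L (v + w) = L v + L w) \<and>
                    (\<forall>a. \<forall>v\<in>V. L (sm a v) = a * L v) \<and>
                    (\<exists>C. \<forall>v\<in>V. cmod (L v) \<le> C * norm v)}"

definition holo_on :: "(complex \<Rightarrow> 'a::real_normed_vector \<Rightarrow> 'a) \<Rightarrow> 'a set \<Rightarrow> 'a set \<Rightarrow> ('a \<Rightarrow> complex) \<Rightarrow> bool" where
  "holo_on sm V U g \<longleftrightarrow>
     (\<forall>x\<in>U. \<exists>L\<in>cdual sm V.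
        ((\<lambda>y. cmod (g y - g x - L (y - x)) / norm (y - x)) \<longlongrightarrow> 0) (at x within V))"

definition restr :: "'a set \<Rightarrow> ('a \<Rightarrow> complex) \<Rightarrow> 'a \<Rightarrow> complex" where
  "restr S g = (\<lambda>x. if x \<in> S then g x else 0)"

text \<open>A_u(B_V): bounded, uniformly continuous, holomorphic functions on the open unit ball
  of V; functions are normalised to be 0 outside the ball.\<close>
definition Au :: "(complex \<Rightarrow> 'a::real_normed_vector \<Rightarrow> 'a) \<Rightarrow> 'a set \<Rightarrow> ('a \<Rightarrow> complex) set" where
  "Au sm V = {g. (\<forall>x. x \<notin> uball V \<longrightarrow> g x = 0) \<and> bounded (g ` uball V) \<and>
                 uniformly_continuous_on (uball V) g \<and> holo_on sm V (uball V) g}"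

definition M0 :: "(complex \<Rightarrow> 'a::real_normed_vector \<Rightarrow> 'a) \<Rightarrow> 'a set \<Rightarrow> (('a \<Rightarrow> complex) \<Rightarrow> complex) set" where
  "M0 sm V = {\<tau>. (\<forall>f\<in>Au sm V. \<forall>g\<in>Au sm V.
                     \<tau> (\<lambda>x. f x + g x) = \<tau> f + \<tau> g \<and> \<tau> (\<lambda>x. f x * g x) = \<tau> f * \<tau> g) \<and>
                 (\<forall>c. \<forall>f\<in>Au sm V. \<tau> (\<lambda>x. c * f x) = c * \<tau> f) \<and>
                 (\<exists>f\<in>Au sm V. \<tau> f \<noteq> 0) \<and>
                 (\<forall>\<phi>\<in>cdual sm V. \<tau> (restr (uball V) \<phi>) = 0)}"

end

theory Submission
  imports Defs
begin

(* For subspaces W \<subseteq> V, restricting a function of A_u(B_V) to the smaller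
   ball B_W gives an element of A_u(B_W): boundedness and uniform continuity
   pass to subsets, and a Frechet derivative along V is also one along W,
   because V^* restricts into W^*.  Restriction g \<mapsto> g|_{B_W} is moreover an
   algebra homomorphism A_u(B_V) \<rightarrow> A_u(B_W) preserving the unit and mapping
   V^* into W^*.  Hence for \<tau> \<in> M_0(B_W) the composite \<sigma> = \<tau> \<circ> restriction
   is a nonzero character of A_u(B_V) vanishing on V^*, i.e. \<sigma> \<in> M_0(B_V),
   and \<sigma>(f) = \<tau>(f|_{B_W}).  The proposition is the case V = X, W = Y. *)

lemma uniformly_continuous_on_subset_cong:
  fixes g h :: "'a::metric_space \<Rightarrow> 'b::metric_space"
  assumes "uniformly_continuous_on T g" "S \<subseteq> T" "\<And>x. x \<in> S \<Longrightarrow> h x = g x"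
  shows "uniformly_continuous_on S h"
  unfolding uniformly_continuous_on_def
proof (intro allI impI)
  fix e :: real assume "e > 0"
  then obtain d where "d > 0" "\<forall>x\<in>T. \<forall>x'\<in>T. dist x' x < d \<longrightarrow> dist (g x') (g x) < e"
    using assms(1) unfolding uniformly_continuous_on_def by blast
  then show "\<exists>d>0. \<forall>x\<in>S. \<forall>x'\<in>S. dist x' x < d \<longrightarrow> dist (h x') (h x) < e"
    using assms(2,3) by (intro exI[of _ d]) auto
qed

lemma restr_add: "restr S (\<lambda>x. g x + h x) = (\<lambda>x. restr S g x + restr S h x)"
  and restr_mult: "restr S (\<lambda>x. g x * h x) = (\<lambda>x. restr S g x * restr S h x)"
  and restr_scale: "restr S (\<lambda>x. c * g x) = (\<lambda>x. c * restr S g x)"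
  by (auto simp: restr_def)

lemma restr_restr: "S \<subseteq> T \<Longrightarrow> restr S (restr T g) = restr S g"
  unfolding restr_def by (intro ext) auto

lemma uball_mono: "W \<subseteq> V \<Longrightarrow> uball W \<subseteq> uball V"
  by (auto simp: uball_def)

lemma cdual_antimono: "W \<subseteq> V \<Longrightarrow> cdual sm V \<subseteq> cdual sm W"
  unfolding cdual_def by blast

text \<open>Near a point of B_W, the points of W lie in B_W, so g and its restriction agree.\<close>
lemma eventually_in_uball:
  assumes "x \<in> uball W"
  shows "\<forall>\<^sub>F y in at x within W. y \<in> uball W"
proof -
  have "x \<in> ball 0 1"
    using assms by (simp add: uball_def)
  then have "\<forall>\<^sub>F y in at x within W. y \<in> ball 0 1"
    by (meson eventually_at_topological open_ball)
  moreover have "\<forall>\<^sub>F y in at x within W. y \<in> W"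
    by (simp add: eventually_at_filter)
  ultimately show ?thesis
    by (rule eventually_elim2) (simp add: uball_def)
qed

text \<open>Holomorphy along V implies holomorphy of the restriction along W \<subseteq> V:
  the derivative at x is simply restricted to W.\<close>
lemma holo_on_restrict:
  assumes holo: "holo_on sm V (uball V) g" and "W \<subseteq> V"
  shows "holo_on sm W (uball W) (restr (uball W) g)"
  unfolding holo_on_def
proof
  fix x assume x: "x \<in> uball W"
  then obtain L where L: "L \<in> cdual sm V"
    and lim: "((\<lambda>y. cmod (g y - g x - L (y - x)) / norm (y - x)) \<longlongrightarrow> 0) (at x within V)"
    using holo uball_mono[OF \<open>W \<subseteq> V\<close>] unfolding holo_on_def by blast
  have lim_W: "((\<lambda>y. cmod (g y - g x - L (y - x)) / norm (y - x)) \<longlongrightarrow> 0) (at x within W)"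
    using lim \<open>W \<subseteq> V\<close> by (rule tendsto_within_subset)
  have agree: "\<forall>\<^sub>F y in at x within W. cmod (g y - g x - L (y - x)) / norm (y - x)
      = cmod (restr (uball W) g y - restr (uball W) g x - L (y - x)) / norm (y - x)"
    using eventually_in_uball[OF x] by eventually_elim (use x in \<open>simp add: restr_def\<close>)
  have "L \<in> cdual sm W"
    using L cdual_antimono[OF \<open>W \<subseteq> V\<close>] by blast
  then show "\<exists>L\<in>cdual sm W.
      ((\<lambda>y. cmod (restr (uball W) g y - restr (uball W) g x - L (y - x)) / norm (y - x))
        \<longlongrightarrow> 0) (at x within W)"
    using tendsto_cong[OF agree] lim_W by blast
qed

lemma Au_restrict:
  assumes g: "g \<in> Au sm V" and WV: "W \<subseteq> V"
  shows "restr (uball W) g \<in> Au sm W"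
proof -
  have agree: "\<And>x. x \<in> uball W \<Longrightarrow> restr (uball W) g x = g x"
    by (simp add: restr_def)
  have "restr (uball W) g ` uball W \<subseteq> g ` uball V"
    using agree uball_mono[OF WV] by auto
  then have "bounded (restr (uball W) g ` uball W)"
    using g bounded_subset unfolding Au_def by blast
  moreover have "uniformly_continuous_on (uball W) (restr (uball W) g)"
    using g uball_mono[OF WV] agree unfolding Au_def
    by (blast intro: uniformly_continuous_on_subset_cong)
  moreover have "holo_on sm W (uball W) (restr (uball W) g)"
    using g WV unfolding Au_def by (blast intro: holo_on_restrict)
  ultimately show ?thesis
    unfolding Au_def by (simp add: restr_def)
qed

text \<open>The unit of A_u(B_V): the constant 1 on the ball (0 outside, by normalisation).\<close>
lemma Au_one: "restr (uball V) (\<lambda>_. 1) \<in> Au sm V"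
proof -
  let ?e = "restr (uball V) (\<lambda>_. 1::complex)"
  have "?e ` uball V \<subseteq> {1}"
    by (auto simp: restr_def)
  then have "bounded (?e ` uball V)"
    by (rule bounded_subset[rotated]) simp
  moreover have "uniformly_continuous_on (uball V) ?e"
    by (rule uniformly_continuous_on_subset_cong[OF uniformly_continuous_on_const[of _ 1]])
       (auto simp: restr_def)
  moreover have "holo_on sm V (uball V) ?e"
    unfolding holo_on_def
  proof
    fix x assume x: "x \<in> uball V"
    have zero_dual: "(\<lambda>_. 0) \<in> cdual sm V"
      unfolding cdual_def by (auto intro: exI[of _ 0])
    have "\<forall>\<^sub>F y in at x within V. 0 = cmod (?e y - ?e x - 0) / norm (y - x)"
      using eventually_in_uball[OF x] by eventually_elim (use x in \<open>simp add: restr_def\<close>)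
    then have "((\<lambda>y. cmod (?e y - ?e x - 0) / norm (y - x)) \<longlongrightarrow> 0) (at x within V)"
      by (rule tendsto_cong[THEN iffD1, OF _ tendsto_const])
    then show "\<exists>L\<in>cdual sm V. ((\<lambda>y. cmod (?e y - ?e x - L (y - x)) / norm (y - x))
        \<longlongrightarrow> 0) (at x within V)"
      using zero_dual by force
  qed
  ultimately show ?thesis
    unfolding Au_def by (simp add: restr_def)
qed

lemma M0_one:
  assumes \<tau>: "\<tau> \<in> M0 sm V"
  shows "\<tau> (restr (uball V) (\<lambda>_. 1)) = 1"
proof -
  let ?e = "restr (uball V) (\<lambda>_. 1::complex)"
  obtain g where g: "g \<in> Au sm V" "\<tau> g \<noteq> 0"
    using \<tau> unfolding M0_def by blast
  have "(\<lambda>x. g x * ?e x) = g"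
    using g(1) by (auto simp: restr_def Au_def)
  moreover have "\<tau> (\<lambda>x. g x * ?e x) = \<tau> g * \<tau> ?e"
    using \<tau> g(1) Au_one unfolding M0_def by blast
  ultimately show ?thesis
    using g(2) by simp
qed

lemma M0_pullback:
  assumes \<tau>: "\<tau> \<in> M0 sm W" and WV: "W \<subseteq> V"
  shows "(\<lambda>g. \<tau> (restr (uball W) g)) \<in> M0 sm V"
proof -
  define \<sigma> where "\<sigma> = (\<lambda>g. \<tau> (restr (uball W) g))"
  have \<tau>_mult: "\<tau> (\<lambda>x. g x + h x) = \<tau> g + \<tau> h \<and> \<tau> (\<lambda>x. g x * h x) = \<tau> g * \<tau> h"
    if "g \<in> Au sm W" "h \<in> Au sm W" for g h
    using \<tau> that unfolding M0_def by blast
  have \<tau>_lin: "\<tau> (\<lambda>x. c * g x) = c * \<tau> g" if "g \<in> Au sm W" for c g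
    using \<tau> that unfolding M0_def by blast
  have mult: "\<forall>g\<in>Au sm V. \<forall>h\<in>Au sm V.
      \<sigma> (\<lambda>x. g x + h x) = \<sigma> g + \<sigma> h \<and> \<sigma> (\<lambda>x. g x * h x) = \<sigma> g * \<sigma> h"
    unfolding \<sigma>_def restr_add restr_mult using \<tau>_mult Au_restrict[OF _ WV] by blast
  have lin: "\<forall>c. \<forall>g\<in>Au sm V. \<sigma> (\<lambda>x. c * g x) = c * \<sigma> g"
    unfolding \<sigma>_def restr_scale using \<tau>_lin Au_restrict[OF _ WV] by blast
  have "\<sigma> (restr (uball V) (\<lambda>_. 1)) = 1"
    unfolding \<sigma>_def restr_restr[OF uball_mono[OF WV]] using M0_one[OF \<tau>] .
  then have nonzero: "\<exists>g\<in>Au sm V. \<sigma> g \<noteq> 0"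
    using Au_one by force
  have \<tau>_dual: "\<tau> (restr (uball W) \<phi>) = 0" if "\<phi> \<in> cdual sm W" for \<phi>
    using \<tau> that unfolding M0_def by blast
  have dual: "\<forall>\<phi>\<in>cdual sm V. \<sigma> (restr (uball V) \<phi>) = 0"
    unfolding \<sigma>_def restr_restr[OF uball_mono[OF WV]]
    using \<tau>_dual cdual_antimono[OF WV] by blast
  have "\<sigma> \<in> M0 sm V"
    unfolding M0_def using mult lin nonzero dual by (intro CollectI conjI)
  then show ?thesis
    unfolding \<sigma>_def .
qed

theorem proposition2p8:
  fixes sm :: "complex \<Rightarrow> 'a::banach \<Rightarrow> 'a" and Y :: "'a set" and f :: "'a \<Rightarrow> complex"
  assumes "complex_scaling sm"
    and "complex_subspace sm Y" and "closed Y"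
    and "f \<in> Au sm UNIV"
  shows "(\<lambda>\<tau>. \<tau> (restr (uball Y) f)) ` M0 sm Y \<subseteq> (\<lambda>\<tau>. \<tau> f) ` M0 sm UNIV"
proof
  fix w assume "w \<in> (\<lambda>\<tau>. \<tau> (restr (uball Y) f)) ` M0 sm Y"
  then obtain \<tau> where \<tau>: "\<tau> \<in> M0 sm Y" and w: "w = \<tau> (restr (uball Y) f)"
    by blast
  have "(\<lambda>g. \<tau> (restr (uball Y) g)) \<in> M0 sm UNIV"
    using M0_pullback[OF \<tau>] by blast
  then show "w \<in> (\<lambda>\<tau>. \<tau> f) ` M0 sm UNIV"
    unfolding w by (rule image_eqI[rotated]) simp
qed

end
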